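(* Let $\eta,\lambda>0$ with $\eta\lambda\le\tfrac12$, let $x(0)$ satisfy $\|x(0)\|_2^2\ge\pi^2\rho\eta$, and $x(t+1)=(1-\eta\lambda)x(t)-\eta\nabla L(x(t))$. Let $T_0=\left\lceil\frac{1}{2\eta\lambda}\ln\frac{2\|x(0)\|_2^2}{\rho\pi^2\eta}\right\rceil$. Then $$\min_{t=0,\ldots,T_0}\|\nabla L(\bar x(t))\|_2^2\le 8\pi^4\rho^2\lambda\eta .$$
   Context: $L:\mathbb{R}^d\setminus\{0\}\to\mathbb{R}$ is $C^2$ and scale invariant, i.e. $L(cx)=L(x)$ for all $c>0$, $x\ne0$. $\rho:=\max_{\|x\|_2=1}\|\nabla^2L(x)\|_2>0$ (spectral norm). For $x\neq0$, $\bar x:=x/\|x\|_2$. *)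

theory Defs
  imports "HOL-Analysis.Analysis"
begin

end

theory Submission
  imports Defs
begin

(* Scale invariance makes gradL homogeneous of degree -1 and orthogonal to its argument, and
   hessL homogeneous of degree -2, so norm (hessL y) <= rho / norm y ^ 2; a second-order Taylor
   bound between a critical point of L on the unit sphere and any unit vector on its hemisphere
   then shows that L oscillates by at most 4 rho (this needs dimension >= 2, which holds as soon
   as some gradient is nonzero).
   Orthogonality gives the exact recursion
     norm (x (t+1))^2 = (1 - eta lam)^2 norm (x t)^2 + eta^2 norm (gradL (x t))^2.
   While norm (x t)^2 >= pi^2 rho eta the step is short compared with the local smoothness
   rho / norm (x t)^2, so L drops by 8/9 eta norm (gradL (x t))^2; the bounded oscillation caps
   the total gradient mass, and the geometric decay then forces norm (x t)^2 below pi^2 rho eta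
   within T0 steps. At the last step k before that happens, norm (gradL of the normalized x k)^2
   = norm (x k)^2 norm (gradL (x k))^2 is controlled through the recursion. *)

lemma abs_diff_le_of_deriv_le_linear:
  fixes \<phi> \<phi>' :: "real \<Rightarrow> real"
  assumes deriv: "\<And>s. 0 \<le> s \<Longrightarrow> s \<le> 1 \<Longrightarrow> (\<phi> has_real_derivative \<phi>' s) (at s)"
    and bound: "\<And>s. 0 \<le> s \<Longrightarrow> s \<le> 1 \<Longrightarrow> \<bar>\<phi>' s\<bar> \<le> K * s"
  shows "\<bar>\<phi> 1 - \<phi> 0\<bar> \<le> K / 2"
proof -
  have "(\<lambda>s. \<phi> s - K * s ^ 2 / 2) 1 \<le> (\<lambda>s. \<phi> s - K * s ^ 2 / 2) 0"
  proof (rule DERIV_nonpos_imp_nonincreasing[of 0 1 "\<lambda>s. \<phi> s - K * s ^ 2 / 2"])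
    fix s :: real assume s: "0 \<le> s" "s \<le> 1"
    have "((\<lambda>s. \<phi> s - K * s ^ 2 / 2) has_real_derivative \<phi>' s - K * s) (at s)"
      by (auto intro!: derivative_eq_intros deriv[OF s])
    then show "\<exists>y. ((\<lambda>s. \<phi> s - K * s ^ 2 / 2) has_real_derivative y) (at s) \<and> y \<le> 0"
      using bound[OF s] by (auto simp: abs_le_iff)
  qed simp
  moreover have "(\<lambda>s. \<phi> s + K * s ^ 2 / 2) 0 \<le> (\<lambda>s. \<phi> s + K * s ^ 2 / 2) 1"
  proof (rule DERIV_nonneg_imp_nondecreasing[of 0 1 "\<lambda>s. \<phi> s + K * s ^ 2 / 2"])
    fix s :: real assume s: "0 \<le> s" "s \<le> 1"
    have "((\<lambda>s. \<phi> s + K * s ^ 2 / 2) has_real_derivative \<phi>' s + K * s) (at s)"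
      by (auto intro!: derivative_eq_intros deriv[OF s])
    then show "\<exists>y. ((\<lambda>s. \<phi> s + K * s ^ 2 / 2) has_real_derivative y) (at s) \<and> y \<ge> 0"
      using bound[OF s] by (auto simp: abs_le_iff)
  qed simp
  ultimately show ?thesis by (simp only: abs_le_iff) auto
qed

lemma second_order_taylor_bound:
  fixes f :: "'a::real_inner \<Rightarrow> real" and g :: "'a \<Rightarrow> 'a" and H :: "'a \<Rightarrow> 'a \<Rightarrow>\<^sub>L 'a"
  assumes f': "\<And>z. z \<in> closed_segment p q \<Longrightarrow> (f has_derivative (\<lambda>h. g z \<bullet> h)) (at z)"
    and g': "\<And>z. z \<in> closed_segment p q \<Longrightarrow> (g has_derivative blinfun_apply (H z)) (at z)"
    and H_le: "\<And>z. z \<in> closed_segment p q \<Longrightarrow> norm (H z) \<le> M"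
  shows "\<bar>f q - f p - g p \<bullet> (q - p)\<bar> \<le> M / 2 * norm (q - p) ^ 2"
proof -
  define d where "d = q - p"
  have on_segment: "p + s *\<^sub>R d \<in> closed_segment p q" if "0 \<le> s" "s \<le> 1" for s
    unfolding closed_segment_def d_def using that
    by (auto intro!: exI[of _ s] simp: algebra_simps)
  have g_lipschitz: "norm (g z - g p) \<le> M * norm (z - p)" if "z \<in> closed_segment p q" for z
  proof (rule differentiable_bound[OF convex_closed_segment _ _ that])
    fix y assume "y \<in> closed_segment p q"
    then show "(g has_derivative blinfun_apply (H y)) (at y within closed_segment p q)"
      and "onorm (blinfun_apply (H y)) \<le> M"
      using g' H_le by (auto intro: has_derivative_at_withinI simp: norm_blinfun.rep_eq[symmetric])
  qed simp
  have "\<bar>(\<lambda>s. f (p + s *\<^sub>R d) - s * (g p \<bullet> d)) 1 - (\<lambda>s. f (p + s *\<^sub>R d) - s * (g p \<bullet> d)) 0\<bar>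
      \<le> M * norm d ^ 2 / 2"
  proof (rule abs_diff_le_of_deriv_le_linear)
    fix s :: real assume s: "0 \<le> s" "s \<le> 1"
    have "((\<lambda>s. p + s *\<^sub>R d) has_derivative (\<lambda>h. h *\<^sub>R d)) (at s)"
      by (auto intro!: derivative_eq_intros)
    from has_derivative_compose[OF this f'[OF on_segment[OF s]]]
    show "((\<lambda>s. f (p + s *\<^sub>R d) - s * (g p \<bullet> d)) has_real_derivative (g (p + s *\<^sub>R d) - g p) \<bullet> d) (at s)"
      by (auto intro!: derivative_eq_intros simp: has_real_derivative_iff_has_vector_derivative
          has_vector_derivative_def fun_eq_iff algebra_simps)
    have "\<bar>(g (p + s *\<^sub>R d) - g p) \<bullet> d\<bar> \<le> norm (g (p + s *\<^sub>R d) - g p) * norm d"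
      by (rule Cauchy_Schwarz_ineq2)
    also have "\<dots> \<le> M * norm (s *\<^sub>R d) * norm d"
      using g_lipschitz[OF on_segment[OF s]] by (intro mult_right_mono) auto
    finally show "\<bar>(g (p + s *\<^sub>R d) - g p) \<bullet> d\<bar> \<le> M * norm d ^ 2 * s"
      using s by (simp add: power2_eq_square mult_ac)
  qed
  then show ?thesis by (simp add: d_def algebra_simps)
qed

lemma two_le_DIM_if_orthogonal:
  fixes a b :: "'a::euclidean_space"
  assumes "a \<noteq> 0" "b \<noteq> 0" "a \<bullet> b = 0"
  shows "2 \<le> DIM('a)"
proof -
  have "a \<noteq> b"
    using assms by auto
  have "pairwise orthogonal {a, b}"
    using assms by (auto simp: pairwise_insert orthogonal_def inner_commute)
  then have "independent {a, b}"
    using assms by (intro pairwise_orthogonal_independent) auto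
  then show ?thesis
    using independent_bound[of "{a, b}"] \<open>a \<noteq> b\<close> by simp
qed

lemma exists_unit_nonneg_inner:
  fixes u v :: "'a::euclidean_space"
  assumes "2 \<le> DIM('a)" "norm u = 1" "norm v = 1"
  obtains w where "norm w = 1" "u \<bullet> w \<ge> 0" "v \<bullet> w \<ge> 0"
proof (cases "u + v = 0")
  case True
  obtain w where "w \<noteq> 0" "orthogonal u w"
    using orthogonal_to_vector_exists[OF assms(1)] by blast
  then show ?thesis
    using True that[of "w /\<^sub>R norm w"]
    by (simp add: orthogonal_def eq_neg_iff_add_eq_0[symmetric] add.commute)
next
  case False
  have "u \<bullet> v \<ge> -1"
    using Cauchy_Schwarz_ineq2[of u v] assms by auto
  moreover have "u \<bullet> (u + v) = 1 + u \<bullet> v" "v \<bullet> (u + v) = 1 + u \<bullet> v"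
    using assms by (simp_all add: inner_add_right inner_commute dot_square_norm)
  ultimately show ?thesis
    using False that[of "(u + v) /\<^sub>R norm (u + v)"] by simp
qed

lemma pi_sq_gt_9: "9 < pi ^ 2"
proof -
  have "(3::real) ^ 2 < pi ^ 2"
    using pi_gt3 by (intro power_strict_mono) auto
  then show ?thesis by simp
qed

lemma one_minus_pow_mult_le:
  fixes e N P :: real
  assumes "0 \<le> e" "e \<le> 1" "0 < P" "0 < N" "ln (N / P) \<le> e * real T"
  shows "(1 - e) ^ T * N \<le> P"
proof -
  have "(1 - e) ^ T \<le> exp (- e) ^ T"
    using assms(2) exp_ge_add_one_self[of "- e"] by (intro power_mono) auto
  also have "\<dots> = exp (- (e * real T))"
    by (simp add: exp_of_nat_mult[symmetric] mult.commute)
  also have "\<dots> \<le> exp (- ln (N / P))"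
    using assms(5) by simp
  also have "\<dots> = P / N"
    using assms(3,4) by (simp add: exp_minus)
  finally show ?thesis
    using assms(4) by (simp add: le_divide_eq)
qed

lemma crossing_product_le:
  fixes e P m :: real
  assumes e: "0 < e" "e \<le> 1/2" and "0 < P" "P \<le> m"
  shows "m * (P - (1 - e) ^ 2 * m) \<le> 8 * e * P ^ 2"
proof (cases "(1 - e) ^ 2 \<ge> 1/2")
  case True
  have "m * (P - (1 - e) ^ 2 * m) - P * (P - (1 - e) ^ 2 * P) = (m - P) * (P - (1 - e) ^ 2 * (m + P))"
    by (simp add: algebra_simps)
  also have "\<dots> \<le> 0"
  proof (rule mult_nonneg_nonpos)
    have "(1/2) * (P + P) \<le> (1 - e) ^ 2 * (m + P)"
      using True assms by (intro mult_mono) auto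
    then show "P - (1 - e) ^ 2 * (m + P) \<le> 0" by simp
  qed (use assms in simp)
  finally have "m * (P - (1 - e) ^ 2 * m) \<le> (2 * e - e ^ 2) * P ^ 2"
    by (simp add: power2_eq_square algebra_simps)
  also have "\<dots> \<le> 8 * e * P ^ 2"
  proof (rule mult_right_mono)
    show "2 * e - e ^ 2 \<le> 8 * e"
      using e zero_le_power2[of e] by linarith
  qed simp
  finally show ?thesis .
next
  case False
  \<comment> \<open>then \<open>e > 1/4\<close>, so the maximum \<open>P\<^sup>2 / (4 (1 - e)\<^sup>2)\<close> over all \<open>m\<close> is at most \<open>P\<^sup>2 \<le> 8 e P\<^sup>2\<close>\<close>
  have "e > 1/4"
  proof (rule ccontr)
    assume "\<not> e > 1/4"
    then have "(3/4::real) ^ 2 \<le> (1 - e) ^ 2"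
      using e by (intro power_mono) auto
    then show False
      using False by (simp add: power2_eq_square)
  qed
  have "(1/2::real) ^ 2 \<le> (1 - e) ^ 2"
    using e by (intro power_mono) auto
  then have quarter: "1/4 \<le> (1 - e) ^ 2"
    by (simp add: power2_eq_square)
  have vertex: "4 * (1 - e) ^ 2 * (m * (P - (1 - e) ^ 2 * m)) \<le> P ^ 2"
    using sum_squares_ge_zero[of "P - 2 * (1 - e) ^ 2 * m" 0]
    by (simp add: power2_eq_square algebra_simps)
  have "m * (P - (1 - e) ^ 2 * m) \<le> P ^ 2"
  proof (cases "m * (P - (1 - e) ^ 2 * m) \<le> 0")
    case False
    then have "1 * (m * (P - (1 - e) ^ 2 * m)) \<le> (4 * (1 - e) ^ 2) * (m * (P - (1 - e) ^ 2 * m))"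
      using quarter by (intro mult_right_mono) auto
    then show ?thesis
      using vertex by simp
  qed (use zero_le_power2[of P] in linarith)
  also have "\<dots> \<le> (8 * e) * P ^ 2"
    using mult_right_mono[of 1 "8 * e" "P ^ 2"] \<open>e > 1/4\<close> by simp
  finally show ?thesis .
qed

locale scale_invariant_function =
  fixes L :: "'a::euclidean_space \<Rightarrow> real" and gradL :: "'a \<Rightarrow> 'a"
  assumes has_derivative_L: "\<And>y. y \<noteq> 0 \<Longrightarrow> (L has_derivative (\<lambda>h. gradL y \<bullet> h)) (at y)"
    and L_scaleR: "\<And>c y. c > 0 \<Longrightarrow> y \<noteq> 0 \<Longrightarrow> L (c *\<^sub>R y) = L y"
begin

lemma gradL_scaleR:
  assumes "c > 0" "y \<noteq> 0"
  shows "gradL (c *\<^sub>R y) = gradL y /\<^sub>R c"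
proof -
  have "((\<lambda>z. c *\<^sub>R z) has_derivative (\<lambda>h. c *\<^sub>R h)) (at y)"
    by (auto intro!: derivative_eq_intros)
  from has_derivative_compose[OF this has_derivative_L]
  have "((\<lambda>z. L (c *\<^sub>R z)) has_derivative (\<lambda>h. gradL (c *\<^sub>R y) \<bullet> (c *\<^sub>R h))) (at y)"
    using assms by simp
  moreover have "((\<lambda>z. L (c *\<^sub>R z)) has_derivative (\<lambda>h. gradL y \<bullet> h)) (at y)"
    by (rule has_derivative_transform_within_open[OF has_derivative_L, where s = "-{0}"])
      (use assms L_scaleR in auto)
  ultimately have "(\<lambda>h. gradL (c *\<^sub>R y) \<bullet> (c *\<^sub>R h)) = (\<lambda>h. gradL y \<bullet> h)"
    by (rule has_derivative_unique)
  then have "\<forall>h. (c *\<^sub>R gradL (c *\<^sub>R y)) \<bullet> h = gradL y \<bullet> h"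
    by (simp add: fun_eq_iff)
  then have "c *\<^sub>R gradL (c *\<^sub>R y) = gradL y"
    by (simp only: vector_eq_rdot)
  then have "gradL y /\<^sub>R c = inverse c *\<^sub>R c *\<^sub>R gradL (c *\<^sub>R y)"
    by simp
  then show ?thesis
    using assms(1) by simp
qed

lemma gradL_orthogonal:
  assumes "y \<noteq> 0"
  shows "gradL y \<bullet> y = 0"
proof -
  have "((\<lambda>c::real. c *\<^sub>R y) has_derivative (\<lambda>h. h *\<^sub>R y)) (at 1)"
    by (auto intro!: derivative_eq_intros)
  from has_derivative_compose[OF this has_derivative_L]
  have "((\<lambda>c. L (c *\<^sub>R y)) has_derivative (\<lambda>h. gradL y \<bullet> (h *\<^sub>R y))) (at 1)"
    using assms by simp
  moreover have "((\<lambda>c. L (c *\<^sub>R y)) has_derivative (\<lambda>h::real. 0)) (at 1)"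
    by (rule has_derivative_transform_within_open[OF has_derivative_const, where s = "{0<..}"])
      (use assms L_scaleR in auto)
  ultimately have "(\<lambda>h. gradL y \<bullet> (h *\<^sub>R y)) = (\<lambda>h. 0)"
    by (rule has_derivative_unique)
  from fun_cong[OF this, of 1] show ?thesis by simp
qed

lemma norm_gradL_normalize:
  assumes "y \<noteq> 0"
  shows "norm (gradL (y /\<^sub>R norm y)) = norm y * norm (gradL y)"
proof -
  have "gradL (y /\<^sub>R norm y) = norm y *\<^sub>R gradL y"
    using assms gradL_scaleR[of "inverse (norm y)" y] by simp
  then show ?thesis by simp
qed

lemma L_attains_extrema:
  obtains u v where "norm u = 1" "norm v = 1" "gradL u = 0" "gradL v = 0"
    and "\<And>y. y \<noteq> 0 \<Longrightarrow> L v \<le> L y \<and> L y \<le> L u"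
proof -
  have "continuous_on (sphere 0 1) L"
    by (rule continuous_at_imp_continuous_on) (auto intro: has_derivative_continuous[OF has_derivative_L])
  moreover obtain b :: 'a where "b \<in> Basis"
    using nonempty_Basis by blast
  then have "sphere (0::'a) 1 \<noteq> {}"
    by (auto intro!: exI[of _ b])
  ultimately obtain u v where u: "u \<in> sphere 0 1" "\<forall>y\<in>sphere 0 1. L y \<le> L u"
    and v: "v \<in> sphere 0 1" "\<forall>y\<in>sphere 0 1. L v \<le> L y"
    using continuous_attains_sup[OF compact_sphere] continuous_attains_inf[OF compact_sphere] by metis
  have bounds: "L v \<le> L y \<and> L y \<le> L u" if "y \<noteq> 0" for y
  proof -
    have "y /\<^sub>R norm y \<in> sphere 0 1" "L (y /\<^sub>R norm y) = L y"
      using L_scaleR[of "inverse (norm y)" y] that by auto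
    then show ?thesis
      using u(2) v(2) by metis
  qed
  have critical: "gradL p = 0"
    if "p \<noteq> 0" "(\<forall>y\<in>-{0}. L y \<le> L p) \<or> (\<forall>y\<in>-{0}. L p \<le> L y)" for p
  proof -
    have "(\<lambda>h. gradL p \<bullet> h) = (\<lambda>h. 0)"
      using differential_zero_maxmin[OF _ open_Compl[OF closed_singleton] has_derivative_L] that by auto
    from fun_cong[OF this, of "gradL p"] show ?thesis by simp
  qed
  have "gradL u = 0" "gradL v = 0"
    by (rule critical; use u v bounds in force)+
  then show ?thesis
    using that u v bounds by auto
qed

end

locale scale_invariant_C2 = scale_invariant_function L gradL
  for L :: "'a::euclidean_space \<Rightarrow> real" and gradL +
  fixes hessL :: "'a \<Rightarrow> 'a \<Rightarrow>\<^sub>L 'a"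
  assumes has_derivative_gradL: "\<And>y. y \<noteq> 0 \<Longrightarrow> (gradL has_derivative blinfun_apply (hessL y)) (at y)"
    and continuous_on_hessL: "continuous_on (- {0}) hessL"
begin

definition sharpness :: real
  where "sharpness = (SUP y\<in>sphere 0 1. norm (hessL y))"

lemma hessL_scaleR:
  assumes "c > 0" "y \<noteq> 0"
  shows "hessL (c *\<^sub>R y) = hessL y /\<^sub>R c ^ 2"
proof -
  have "((\<lambda>z. c *\<^sub>R z) has_derivative (\<lambda>h. c *\<^sub>R h)) (at y)"
    by (auto intro!: derivative_eq_intros)
  from has_derivative_compose[OF this has_derivative_gradL]
  have "((\<lambda>z. gradL (c *\<^sub>R z)) has_derivative (\<lambda>h. hessL (c *\<^sub>R y) (c *\<^sub>R h))) (at y)"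
    using assms by simp
  moreover have "((\<lambda>z. gradL (c *\<^sub>R z)) has_derivative (\<lambda>h. hessL y h /\<^sub>R c)) (at y)"
    by (rule has_derivative_transform_within_open
        [OF has_derivative_scaleR_right[OF has_derivative_gradL], where s = "-{0}"])
      (use assms gradL_scaleR in auto)
  ultimately have "(\<lambda>h. hessL (c *\<^sub>R y) (c *\<^sub>R h)) = (\<lambda>h. hessL y h /\<^sub>R c)"
    by (rule has_derivative_unique)
  then have scaled: "c *\<^sub>R hessL (c *\<^sub>R y) h = hessL y h /\<^sub>R c" for h
    by (metis blinfun.scaleR_right)
  have "hessL (c *\<^sub>R y) h = (hessL y /\<^sub>R c ^ 2) h" for h
    using arg_cong[OF scaled[of h], of "scaleR (inverse c)"] assms(1)
    by (simp add: scaleR_blinfun.rep_eq power2_eq_square)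
  then show ?thesis
    by (rule blinfun_eqI)
qed

lemma norm_hessL_le:
  assumes "y \<noteq> 0"
  shows "norm (hessL y) \<le> sharpness / norm y ^ 2"
proof -
  have "compact ((\<lambda>y. norm (hessL y)) ` sphere 0 1)"
    by (intro compact_continuous_image continuous_on_norm compact_sphere
        continuous_on_subset[OF continuous_on_hessL]) auto
  then have bdd: "bdd_above ((\<lambda>y. norm (hessL y)) ` sphere 0 1)"
    by (intro bounded_imp_bdd_above compact_imp_bounded)
  have "hessL y = hessL (y /\<^sub>R norm y) /\<^sub>R norm y ^ 2"
    using assms hessL_scaleR[of "norm y" "y /\<^sub>R norm y"] by simp
  then have "norm (hessL y) = norm (hessL (y /\<^sub>R norm y)) / norm y ^ 2"
    by (simp add: divide_inverse_commute)
  also have "\<dots> \<le> sharpness / norm y ^ 2"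
    unfolding sharpness_def using assms
    by (intro divide_right_mono cSUP_upper[OF _ bdd]) auto
  finally show ?thesis .
qed

lemma sharpness_nonneg: "sharpness \<ge> 0"
proof -
  obtain b :: 'a where "b \<in> Basis"
    using nonempty_Basis by blast
  then have "norm (hessL b) \<le> sharpness"
    using norm_hessL_le[of b] by (auto simp: nonzero_Basis)
  then show ?thesis
    using norm_ge_zero order_trans by blast
qed

lemma L_taylor_bound:
  assumes "r > 0" and away: "\<And>z. z \<in> closed_segment p q \<Longrightarrow> r \<le> norm z ^ 2"
  shows "\<bar>L q - L p - gradL p \<bullet> (q - p)\<bar> \<le> sharpness / (2 * r) * norm (q - p) ^ 2"
proof -
  have nonzero: "z \<noteq> 0" if "z \<in> closed_segment p q" for z
    using away[OF that] assms(1) by auto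
  have "norm (hessL z) \<le> sharpness / r" if "z \<in> closed_segment p q" for z
  proof -
    have "norm (hessL z) \<le> sharpness / norm z ^ 2"
      using norm_hessL_le nonzero[OF that] .
    also have "\<dots> \<le> sharpness / r"
      using away[OF that] assms(1) sharpness_nonneg by (intro divide_left_mono) (auto intro!: mult_pos_pos)
    finally show ?thesis .
  qed
  then show ?thesis
    using second_order_taylor_bound[of p q L gradL hessL "sharpness / r"]
      has_derivative_L has_derivative_gradL nonzero by simp
qed

lemma abs_L_diff_le_of_critical:
  assumes "norm u = 1" "norm w = 1" "u \<bullet> w \<ge> 0" "gradL u = 0"
  shows "\<bar>L w - L u\<bar> \<le> 2 * sharpness"
proof -
  have "1/2 \<le> norm z ^ 2" if z_in: "z \<in> closed_segment u w" for z
  proof -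
    obtain s where s: "0 \<le> s" "s \<le> 1" and z: "z = (1 - s) *\<^sub>R u + s *\<^sub>R w"
      using z_in unfolding closed_segment_def by auto
    have "norm z ^ 2 = (1 - s) ^ 2 * (u \<bullet> u) + s ^ 2 * (w \<bullet> w) + 2 * s * (1 - s) * (u \<bullet> w)"
      unfolding z power2_norm_eq_inner
      by (simp add: inner_add_left inner_add_right inner_commute power2_eq_square algebra_simps)
    then have "norm z ^ 2 = (1 - s) ^ 2 + s ^ 2 + 2 * s * (1 - s) * (u \<bullet> w)"
      using assms(1,2) by (simp add: dot_square_norm)
    moreover have "2 * s * (1 - s) * (u \<bullet> w) \<ge> 0"
      using s assms(3) by simp
    moreover have "(1 - s) ^ 2 + s ^ 2 \<ge> 1/2"
      using sum_squares_ge_zero[of "s - 1/2" 0] by (simp add: power2_eq_square algebra_simps)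
    ultimately show ?thesis by linarith
  qed
  then have "\<bar>L w - L u\<bar> \<le> sharpness / (2 * (1/2)) * norm (w - u) ^ 2"
    using L_taylor_bound[of "1/2" u w] assms(4) by simp
  moreover have "norm (w - u) ^ 2 \<le> 2"
  proof -
    have "norm (w - u) ^ 2 = w \<bullet> w + u \<bullet> u - 2 * (u \<bullet> w)"
      by (simp add: power2_norm_eq_inner inner_diff_left inner_diff_right inner_commute)
    then show ?thesis
      using assms(1-3) by (simp add: dot_square_norm)
  qed
  ultimately show ?thesis
    using sharpness_nonneg mult_left_mono[of "norm (w - u) ^ 2" 2 sharpness] by simp
qed

lemma L_oscillation_le:
  assumes "2 \<le> DIM('a)" "y \<noteq> 0" "z \<noteq> 0"
  shows "L y - L z \<le> 4 * sharpness"
proof -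
  obtain u v where u: "norm u = 1" and v: "norm v = 1" and "gradL u = 0" "gradL v = 0"
    and bounds: "\<And>y. y \<noteq> 0 \<Longrightarrow> L v \<le> L y \<and> L y \<le> L u"
    by (rule L_attains_extrema) blast
  obtain w where "norm w = 1" "u \<bullet> w \<ge> 0" "v \<bullet> w \<ge> 0"
    using exists_unit_nonneg_inner[OF assms(1) u v] .
  then have "\<bar>L w - L u\<bar> \<le> 2 * sharpness" "\<bar>L w - L v\<bar> \<le> 2 * sharpness"
    using abs_L_diff_le_of_critical u v \<open>gradL u = 0\<close> \<open>gradL v = 0\<close> by blast+
  then show ?thesis
    using bounds[OF assms(2)] bounds[OF assms(3)] by linarith
qed

end

locale weight_decay_gd = scale_invariant_C2 L gradL hessL
  for L :: "'a::euclidean_space \<Rightarrow> real" and gradL hessL +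
  fixes x :: "nat \<Rightarrow> 'a" and eta lam :: real
  assumes eta_pos: "eta > 0" and lam_pos: "lam > 0" and eta_lam_le: "eta * lam \<le> 1/2"
    and x0_nonzero: "x 0 \<noteq> 0"
    and step: "\<And>t. x (Suc t) = (1 - eta * lam) *\<^sub>R x t - eta *\<^sub>R gradL (x t)"
begin

lemma norm_step_sq:
  assumes "x t \<noteq> 0"
  shows "norm (x (Suc t)) ^ 2 = (1 - eta * lam) ^ 2 * norm (x t) ^ 2 + eta ^ 2 * norm (gradL (x t)) ^ 2"
  using gradL_orthogonal[OF assms]
  unfolding step power2_norm_eq_inner
  by (simp add: inner_commute power2_eq_square algebra_simps)

lemma iterate_nonzero: "x t \<noteq> 0"
proof (induction t)
  case 0
  show ?case by (rule x0_nonzero)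
next
  case (Suc t)
  have "0 < (1 - eta * lam) ^ 2 * norm (x t) ^ 2"
    using Suc eta_lam_le by simp
  also have "\<dots> \<le> norm (x (Suc t)) ^ 2"
    using norm_step_sq[OF Suc] by simp
  finally show ?case by auto
qed

lemma norm_sq_le:
  "norm (x T) ^ 2 \<le> ((1 - eta * lam) ^ 2) ^ T * norm (x 0) ^ 2
     + eta ^ 2 * (\<Sum>t<T. norm (gradL (x t)) ^ 2)"
proof (induction T)
  case 0
  show ?case by simp
next
  case (Suc T)
  define a where "a = (1 - eta * lam) ^ 2"
  have a: "0 \<le> a" "a \<le> 1"
    using eta_pos lam_pos eta_lam_le by (auto simp: a_def power_le_one)
  have S: "0 \<le> eta ^ 2 * (\<Sum>t<T. norm (gradL (x t)) ^ 2)"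
    by (simp add: sum_nonneg)
  have "norm (x (Suc T)) ^ 2 = a * norm (x T) ^ 2 + eta ^ 2 * norm (gradL (x T)) ^ 2"
    using norm_step_sq[OF iterate_nonzero] by (simp add: a_def)
  also have "\<dots> \<le> a * (a ^ T * norm (x 0) ^ 2 + eta ^ 2 * (\<Sum>t<T. norm (gradL (x t)) ^ 2))
      + eta ^ 2 * norm (gradL (x T)) ^ 2"
  proof -
    have "norm (x T) ^ 2 \<le> a ^ T * norm (x 0) ^ 2 + eta ^ 2 * (\<Sum>t<T. norm (gradL (x t)) ^ 2)"
      using Suc by (simp add: a_def)
    then show ?thesis
      using mult_left_mono a(1) by simp
  qed
  also have "\<dots> \<le> a ^ Suc T * norm (x 0) ^ 2 + eta ^ 2 * (\<Sum>t<Suc T. norm (gradL (x t)) ^ 2)"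
    using mult_left_le_one_le[OF S a(1,2)] by (simp add: algebra_simps)
  finally show ?case
    by (simp add: a_def)
qed

lemma L_descent:
  assumes large: "9 * sharpness * eta \<le> norm (x t) ^ 2"
  shows "L (x (Suc t)) \<le> L (x t) - 8/9 * eta * norm (gradL (x t)) ^ 2"
proof -
  define e where "e = eta * lam"
  define eta' where "eta' = eta / (1 - e)"
  define g where "g = gradL (x t)"
  define z where "z = x t - eta' *\<^sub>R g"
  have e: "0 < e" "e \<le> 1/2"
    using eta_pos lam_pos eta_lam_le by (auto simp: e_def)
  have eta': "eta \<le> eta'" "eta' \<le> 2 * eta"
    using e eta_pos by (auto simp: eta'_def field_simps)
  have n_pos: "0 < norm (x t) ^ 2"
    using iterate_nonzero by simp
  \<comment> \<open>weight decay only rescales, so the step is a plain gradient step with rate \<open>eta'\<close>\<close>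
  have "x (Suc t) = (1 - e) *\<^sub>R z"
    using e by (simp add: step z_def g_def e_def eta'_def scaleR_diff_right)
  then have "L (x (Suc t)) = L z"
    using e iterate_nonzero[of "Suc t"] L_scaleR[of "1 - e" z] by auto
  \<comment> \<open>the step is orthogonal to \<open>x t\<close>, so the segment stays outside the ball of radius \<open>norm (x t)\<close>\<close>
  have "norm (x t) ^ 2 \<le> norm y ^ 2" if y_in: "y \<in> closed_segment (x t) z" for y
  proof -
    obtain s where "y = (1 - s) *\<^sub>R x t + s *\<^sub>R z"
      using y_in by (auto simp: closed_segment_def)
    then have "y = x t - (s * eta') *\<^sub>R g"
      by (simp add: z_def algebra_simps)
    then have "norm y ^ 2 = norm (x t - (s * eta') *\<^sub>R g) ^ 2"
      by simp
    also have "\<dots> = norm (x t) ^ 2 + (s * eta') ^ 2 * norm g ^ 2"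
      using gradL_orthogonal[OF iterate_nonzero[of t]] unfolding power2_norm_eq_inner
      by (simp add: g_def inner_commute power2_eq_square algebra_simps)
    finally show ?thesis by simp
  qed
  then have "\<bar>L z - L (x t) - g \<bullet> (z - x t)\<bar> \<le> sharpness / (2 * norm (x t) ^ 2) * norm (z - x t) ^ 2"
    unfolding g_def by (rule L_taylor_bound[OF n_pos])
  then have "L z \<le> L (x t) - eta' * norm g ^ 2 + (sharpness * eta' / (2 * norm (x t) ^ 2)) * (eta' * norm g ^ 2)"
    using eta' eta_pos by (simp add: z_def dot_square_norm power2_eq_square abs_le_iff mult_ac)
  also have "\<dots> \<le> L (x t) - eta' * norm g ^ 2 + 1/9 * (eta' * norm g ^ 2)"
  proof -
    have "sharpness * eta' \<le> sharpness * (2 * eta)"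
      using eta' sharpness_nonneg by (intro mult_left_mono) auto
    then have "sharpness * eta' / (2 * norm (x t) ^ 2) \<le> 1/9"
      using large n_pos by (simp add: divide_le_eq)
    then show ?thesis
      using eta' eta_pos by (intro add_left_mono mult_right_mono) auto
  qed
  also have "\<dots> \<le> L (x t) - 8/9 * eta * norm g ^ 2"
    using eta' by (simp add: mult_right_mono)
  finally show ?thesis
    using \<open>L (x (Suc t)) = L z\<close> by (simp add: g_def)
qed

lemma L_telescope:
  assumes "\<And>t. t < T \<Longrightarrow> 9 * sharpness * eta \<le> norm (x t) ^ 2"
  shows "8/9 * eta * (\<Sum>t<T. norm (gradL (x t)) ^ 2) \<le> L (x 0) - L (x T)"
  using assms
proof (induction T)
  case 0
  show ?case by simp
next
  case (Suc T)
  then have "8/9 * eta * (\<Sum>t<T. norm (gradL (x t)) ^ 2) \<le> L (x 0) - L (x T)"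
    by simp
  moreover have "L (x (Suc T)) \<le> L (x T) - 8/9 * eta * norm (gradL (x T)) ^ 2"
    using Suc.prems by (intro L_descent) simp
  ultimately show ?case
    by (simp add: distrib_left)
qed

lemma exists_norm_sq_below:
  assumes dim: "2 \<le> DIM('a)" and pos: "sharpness > 0"
    and T: "ln (2 * norm (x 0) ^ 2 / (pi ^ 2 * sharpness * eta)) \<le> 2 * (eta * lam) * real T"
  shows "\<exists>t\<le>T. norm (x t) ^ 2 < pi ^ 2 * sharpness * eta"
proof (rule ccontr)
  define P where "P = pi ^ 2 * sharpness * eta"
  have P_pos: "0 < P" and nine: "9 * sharpness * eta < P"
    using pi_sq_gt_9 pos eta_pos by (simp_all add: P_def)
  assume "\<not> (\<exists>t\<le>T. norm (x t) ^ 2 < pi ^ 2 * sharpness * eta)"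
  then have large: "P \<le> norm (x t) ^ 2" if "t \<le> T" for t
    using that by (force simp: P_def)
  have "9 * sharpness * eta \<le> norm (x t) ^ 2" if "t < T" for t
    using large[of t] nine that by linarith
  then have "8/9 * eta * (\<Sum>t<T. norm (gradL (x t)) ^ 2) \<le> L (x 0) - L (x T)"
    by (rule L_telescope)
  also have "\<dots> \<le> 4 * sharpness"
    using L_oscillation_le[OF dim iterate_nonzero iterate_nonzero] .
  finally have "eta ^ 2 * (\<Sum>t<T. norm (gradL (x t)) ^ 2) \<le> 9/2 * sharpness * eta"
    using eta_pos mult_left_mono[of "8/9 * eta * (\<Sum>t<T. norm (gradL (x t)) ^ 2)" "4 * sharpness" eta]
    by (simp add: power2_eq_square algebra_simps)
  moreover have "((1 - eta * lam) ^ 2) ^ T * norm (x 0) ^ 2 \<le> P / 2"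
  proof -
    have "(1 - eta * lam) ^ (2 * T) * (2 * norm (x 0) ^ 2) \<le> P"
      using eta_pos lam_pos eta_lam_le P_pos x0_nonzero T
      by (intro one_minus_pow_mult_le) (auto simp: P_def mult_ac)
    then show ?thesis
      by (simp add: power_mult)
  qed
  ultimately have "norm (x T) ^ 2 < P"
    using norm_sq_le[of T] nine by linarith
  then show False
    using large[of T] by simp
qed

lemma exists_crossing:
  assumes "2 \<le> DIM('a)" "sharpness > 0"
    and "pi ^ 2 * sharpness * eta \<le> norm (x 0) ^ 2"
    and "ln (2 * norm (x 0) ^ 2 / (pi ^ 2 * sharpness * eta)) \<le> 2 * (eta * lam) * real T"
  obtains k where "k < T" "pi ^ 2 * sharpness * eta \<le> norm (x k) ^ 2"
    "norm (x (Suc k)) ^ 2 < pi ^ 2 * sharpness * eta"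
proof -
  obtain t where "t \<le> T" "norm (x t) ^ 2 < pi ^ 2 * sharpness * eta"
    using exists_norm_sq_below[OF assms(1,2,4)] by blast
  with ex_least_nat_less[of "\<lambda>t. norm (x t) ^ 2 < pi ^ 2 * sharpness * eta" t] assms(3)
  show ?thesis
    using that by (metis leD le_trans less_imp_le_nat not_le)
qed

lemma norm_gradL_normalize_at_crossing:
  assumes "0 < P" "P \<le> norm (x k) ^ 2" "norm (x (Suc k)) ^ 2 < P"
  shows "norm (gradL (x k /\<^sub>R norm (x k))) ^ 2 \<le> 8 * (eta * lam) * P ^ 2 / eta ^ 2"
proof -
  define m where "m = norm (x k) ^ 2"
  have "eta ^ 2 * norm (gradL (x k)) ^ 2 < P - (1 - eta * lam) ^ 2 * m"
    using assms(3) norm_step_sq[OF iterate_nonzero] by (simp add: m_def)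
  then have "m * (eta ^ 2 * norm (gradL (x k)) ^ 2) \<le> m * (P - (1 - eta * lam) ^ 2 * m)"
    using assms by (intro mult_left_mono) (auto simp: m_def)
  also have "\<dots> \<le> 8 * (eta * lam) * P ^ 2"
    using eta_pos lam_pos eta_lam_le assms(1,2) by (intro crossing_product_le) (auto simp: m_def)
  finally have "eta ^ 2 * norm (gradL (x k /\<^sub>R norm (x k))) ^ 2 \<le> 8 * (eta * lam) * P ^ 2"
    using norm_gradL_normalize[OF iterate_nonzero] by (simp add: m_def power_mult_distrib mult_ac)
  then show ?thesis
    using eta_pos by (simp add: field_simps)
qed

lemma exists_small_normalized_gradient:
  assumes pos: "sharpness > 0" and init: "pi ^ 2 * sharpness * eta \<le> norm (x 0) ^ 2"
    and T: "ln (2 * norm (x 0) ^ 2 / (pi ^ 2 * sharpness * eta)) \<le> 2 * (eta * lam) * real T"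
  shows "\<exists>t\<le>T. norm (gradL (x t /\<^sub>R norm (x t))) ^ 2 \<le> 8 * pi ^ 4 * sharpness ^ 2 * lam * eta"
proof (cases "gradL (x 0) = 0")
  case True
  then show ?thesis
    using norm_gradL_normalize[OF x0_nonzero] pos eta_pos lam_pos by (intro exI[of _ 0]) simp
next
  case False
  define P where "P = pi ^ 2 * sharpness * eta"
  have "2 \<le> DIM('a)"
    using two_le_DIM_if_orthogonal[OF x0_nonzero False] gradL_orthogonal[OF x0_nonzero]
    by (simp add: inner_commute)
  then obtain k where "k < T" "P \<le> norm (x k) ^ 2" "norm (x (Suc k)) ^ 2 < P"
    using exists_crossing[OF _ pos init T] by (auto simp: P_def)
  moreover have "0 < P"
    using pos eta_pos by (simp add: P_def)
  moreover have "8 * (eta * lam) * P ^ 2 / eta ^ 2 = 8 * pi ^ 4 * sharpness ^ 2 * lam * eta"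
    using eta_pos by (simp add: P_def power2_eq_square power4_eq_xxxx field_simps)
  ultimately show ?thesis
    using norm_gradL_normalize_at_crossing by (metis less_imp_le_nat)
qed

end

theorem mainTheorem12:
  fixes L :: "'a::euclidean_space \<Rightarrow> real"
    and gradL :: "'a \<Rightarrow> 'a"
    and hessL :: "'a \<Rightarrow> 'a \<Rightarrow>\<^sub>L 'a"
    and x :: "nat \<Rightarrow> 'a"
    and rho eta lam :: real
  assumes grad: "\<And>y. y \<noteq> 0 \<Longrightarrow> (L has_derivative (\<lambda>h. gradL y \<bullet> h)) (at y)"
    and hess: "\<And>y. y \<noteq> 0 \<Longrightarrow> (gradL has_derivative blinfun_apply (hessL y)) (at y)"
    and hess_cont: "continuous_on (- {0}) hessL"
    and scale_inv: "\<And>c y. c > 0 \<Longrightarrow> y \<noteq> 0 \<Longrightarrow> L (c *\<^sub>R y) = L y"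
    and rho_def: "rho = (SUP y\<in>sphere 0 1. norm (hessL y))"
    and rho_pos: "rho > 0"
    and eta_pos: "eta > 0" and lam_pos: "lam > 0"
    and eta_lam: "eta * lam \<le> 1/2"
    and init: "norm (x 0) ^ 2 \<ge> pi ^ 2 * rho * eta"
    and step: "\<And>t. x (Suc t) = (1 - eta * lam) *\<^sub>R x t - eta *\<^sub>R gradL (x t)"
  shows "let T0 = nat \<lceil>(1 / (2 * eta * lam)) * ln (2 * norm (x 0) ^ 2 / (rho * pi ^ 2 * eta))\<rceil>
         in (MIN t\<in>{0..T0}. norm (gradL (x t /\<^sub>R norm (x t))) ^ 2) \<le> 8 * pi ^ 4 * rho ^ 2 * lam * eta"
proof -
  define T0 where "T0 = nat \<lceil>(1 / (2 * eta * lam)) * ln (2 * norm (x 0) ^ 2 / (rho * pi ^ 2 * eta))\<rceil>"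
  have "0 < pi ^ 2 * rho * eta"
    using rho_pos eta_pos by simp
  then interpret weight_decay_gd L gradL hessL x eta lam
    using init by unfold_locales (use grad hess hess_cont scale_inv eta_pos lam_pos eta_lam step in auto)
  have rho_eq: "sharpness = rho"
    by (simp add: sharpness_def rho_def)
  have "ln (2 * norm (x 0) ^ 2 / (pi ^ 2 * rho * eta)) \<le> 2 * (eta * lam) * real T0"
    using real_nat_ceiling_ge[of "(1 / (2 * eta * lam)) * ln (2 * norm (x 0) ^ 2 / (pi ^ 2 * rho * eta))"]
      eta_pos lam_pos by (simp add: T0_def field_simps mult_ac)
  then have "\<exists>t\<le>T0. norm (gradL (x t /\<^sub>R norm (x t))) ^ 2 \<le> 8 * pi ^ 4 * rho ^ 2 * lam * eta"
    using exists_small_normalized_gradient rho_pos init by (simp add: rho_eq)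
  then show ?thesis
    unfolding Let_def T0_def[symmetric] by (subst Min_le_iff) auto
qed

end
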